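(* For every integer $r\ge1$, $\big|\mathrm{Var}(\mu^{(r+1)})-\mathrm{Var}(\mu^{(r)})\big|\le b$.
   Context: Fix an integer $b\ge2$. For $n\in\mathbb{N}$ with base-$b$ digits $n_k$, $s(n):=\sum_kn_k$. For $r,n\in\mathbb{N}$, $\Delta^{(r)}(n):=s(n+r)-s(n)$, and $\mu^{(r)}(d):=\lim_{N\to\infty}\frac1N|\{n<N:\Delta^{(r)}(n)=d\}|$ for $d\in\mathbb{Z}$; these limits exist and $\mu^{(r)}$ is a probability measure on $\mathbb{Z}$ with finite moments. $\mathrm{Var}(\mu^{(r)})$ is its variance. *)

theory Defs
  imports "HOL-Analysis.Analysis"
begin

text \<open>Base-b digit sum: the k-th digit of n is (n div b^k) mod b; for b \<ge> 2 all
  digits with index k > n vanish, so summing over k \<le> n gives the full digit sum.\<close>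
definition digit_sum :: "nat \<Rightarrow> nat \<Rightarrow> nat" where
  "digit_sum b n = (\<Sum>k\<le>n. (n div b ^ k) mod b)"

definition Delta :: "nat \<Rightarrow> nat \<Rightarrow> nat \<Rightarrow> int" where
  "Delta b r n = int (digit_sum b (n + r)) - int (digit_sum b n)"

definition mu :: "nat \<Rightarrow> nat \<Rightarrow> int \<Rightarrow> real" where
  "mu b r d = lim (\<lambda>N. real (card {n. n < N \<and> Delta b r n = d}) / real N)"

definition variance_int :: "(int \<Rightarrow> real) \<Rightarrow> real" where
  "variance_int p = (\<Sum>\<^sub>\<infinity>d\<in>UNIV. (real_of_int d)\<^sup>2 * p d) - (\<Sum>\<^sub>\<infinity>d\<in>UNIV. real_of_int d * p d)\<^sup>2"

end

theory Submission
  imports Defs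
begin

text \<open>Splitting off the last digit, n = b m + j, gives \<Delta>(r)(n) = a + \<Delta>(q)(m) if j + a < b
  and \<Delta>(r)(n) = a - b + \<Delta>(q + 1)(m) otherwise, where r = b q + a. Hence \<mu>(r) is the mixture,
  with weights (b - a)/b and a/b, of \<mu>(q) shifted by a and \<mu>(q + 1) shifted by a - b.
  The law \<mu>(0) is a point mass and \<mu>(1) is the geometric law on 1 - k(b - 1), so by induction
  every \<mu>(r) has finite second moment and mean 0, and its variance V(r) satisfies
  V(b q + a) = ((b - a) V(q) + a V(q + 1))/b + a(b - a).
  Consequently V(r + 1) - V(r) equals (V(q + 1) - V(q))/b plus b - 2a - 1, or minus b - 1
  when r + 1 carries, and the bound b propagates by induction on r.\<close>

section \<open>Digit sums\<close>

lemma digit_sum_eq_sum_atMost: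
  assumes "b \<ge> 2" "n \<le> K"
  shows "digit_sum b n = (\<Sum>k\<le>K. (n div b ^ k) mod b)"
proof -
  have "(n div b ^ k) mod b = 0" if "n < k" for k
  proof -
    have "n < 2 ^ n" by (rule less_exp)
    also have "\<dots> \<le> (2::nat) ^ k" using that by (simp add: power_increasing)
    also have "\<dots> \<le> b ^ k" using assms by (simp add: power_mono)
    finally show ?thesis by simp
  qed
  then show ?thesis unfolding digit_sum_def
    by (intro sum.mono_neutral_left) (use assms in auto)
qed

lemma digit_sum_mult_add:
  assumes "b \<ge> 2" "j < b"
  shows "digit_sum b (b * m + j) = j + digit_sum b m"
proof -
  define n where "n = b * m + j"
  have "m \<le> b * m" using assms by simp
  then have n: "n mod b = j" "n div b = m" "m \<le> n" using assms unfolding n_def by (auto simp: trans_le_add1)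
  have "digit_sum b n = (\<Sum>k\<le>Suc n. (n div b ^ k) mod b)"
    using digit_sum_eq_sum_atMost[OF assms(1), of n "Suc n"] by simp
  also have "\<dots> = n mod b + (\<Sum>k\<le>n. (n div b div b ^ k) mod b)"
    by (simp add: sum.atMost_Suc_shift div_mult2_eq del: sum.atMost_Suc)
  also have "(\<Sum>k\<le>n. (n div b div b ^ k) mod b) = digit_sum b m"
    using digit_sum_eq_sum_atMost[OF assms(1) n(3)] n(2) by simp
  finally show ?thesis using n(1) unfolding n_def by simp
qed

lemma Delta_mult_add:
  assumes "b \<ge> 2" "a < b" "j < b"
  shows "Delta b (b * q + a) (b * m + j) =
    (if j + a < b then int a + Delta b q m else int a - int b + Delta b (q + 1) m)"
proof (cases "j + a < b")
  case True
  have "b * m + j + (b * q + a) = b * (m + q) + (j + a)" by (simp add: algebra_simps)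
  then have "digit_sum b (b * m + j + (b * q + a)) = j + a + digit_sum b (m + q)"
    using digit_sum_mult_add[OF assms(1) True] by metis
  then show ?thesis using True digit_sum_mult_add[OF assms(1,3)] by (simp add: Delta_def)
next
  case False
  then have "b * m + j + (b * q + a) = b * (m + (q + 1)) + (j + a - b)" "j + a - b < b"
    using assms by (simp_all add: algebra_simps)
  then have "digit_sum b (b * m + j + (b * q + a)) = (j + a - b) + digit_sum b (m + (q + 1))"
    using digit_sum_mult_add[OF assms(1)] by metis
  then show ?thesis using False digit_sum_mult_add[OF assms(1,3)] by (simp add: Delta_def of_nat_diff)
qed

section \<open>Relative frequencies\<close>

definition rel_freq :: "(nat \<Rightarrow> bool) \<Rightarrow> nat \<Rightarrow> real" where
  "rel_freq P N = real (card {n. n < N \<and> P n}) / real N"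

lemma card_lessThan_filter_eq_sum: "card {n. n < (N::nat) \<and> P n} = (\<Sum>n<N. of_bool (P n))"
proof (induction N)
  case (Suc N)
  have "{n. n < Suc N \<and> P n} = (if P N then insert N {n. n < N \<and> P n} else {n. n < N \<and> P n})"
    by (auto simp: less_Suc_eq)
  then show ?case using Suc by auto
qed simp

lemma card_lessThan_filter_add_le: "card {n. n < N + k \<and> P n} \<le> card {n. n < N \<and> P n} + k"
proof -
  have "card {n. n < N + k \<and> P n} \<le> card ({n. n < N \<and> P n} \<union> {N..<N + k})"
    by (rule card_mono) auto
  also have "\<dots> \<le> card {n. n < N \<and> P n} + k"
    using card_Un_le[of "{n. n < N \<and> P n}" "{N..<N + k}"] by simp
  finally show ?thesis .
qed

lemma rel_freq_bounds: "0 \<le> rel_freq P N" "rel_freq P N \<le> 1"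
proof -
  have "card {n. n < N \<and> P n} \<le> N"
    using card_mono[of "{..<N}" "{n. n < N \<and> P n}"] by auto
  then show "0 \<le> rel_freq P N" "rel_freq P N \<le> 1"
    unfolding rel_freq_def by (auto simp: divide_le_eq)
qed

lemma ratio_perturbation_le:
  fixes X T S N B :: real
  assumes "0 \<le> T" "T \<le> S" "0 \<le> X" "X \<le> N" "0 < N" "S \<le> B"
  shows "\<bar>(X + T) / (N + S) - X / N\<bar> \<le> 2 * B / (N + S)"
proof -
  have NS: "0 < (N + S) * N" using assms by simp
  have "T * N \<le> B * N" "X * S \<le> N * B" "0 \<le> T * N" "0 \<le> X * S"
    using assms by (auto intro: mult_right_mono mult_mono)
  then have "\<bar>T * N - X * S\<bar> \<le> 2 * B * N" by (simp add: abs_le_iff algebra_simps)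
  then have "\<bar>T * N - X * S\<bar> / ((N + S) * N) \<le> 2 * B * N / ((N + S) * N)"
    using NS by (intro divide_right_mono) auto
  moreover have "(X + T) / (N + S) - X / N = (T * N - X * S) / ((N + S) * N)"
    using assms by (simp add: field_simps)
  ultimately show ?thesis using NS assms by (simp add: abs_divide)
qed

text \<open>Passing from B (M div B) to M counts fewer than B further integers.\<close>

lemma rel_freq_block_approx:
  assumes "1 \<le> B" "B \<le> M"
  shows "\<bar>rel_freq P M - rel_freq P (B * (M div B))\<bar> \<le> 2 * real B / real M"
proof -
  define N where "N = B * (M div B)"
  define S where "S = M - N"
  have M: "M = N + S" "S < B" "0 < N"
    using assms unfolding N_def S_def by (simp_all add: minus_mult_div_eq_mod div_greater_zero_iff)
  define X where "X = card {n. n < N \<and> P n}"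
  define T where "T = card {n. n < M \<and> P n} - X"
  have "X \<le> card {n. n < M \<and> P n}" "card {n. n < M \<and> P n} \<le> X + S"
    using M card_lessThan_filter_add_le[of N S P] unfolding X_def
    by (auto intro: card_mono)
  then have T: "card {n. n < M \<and> P n} = X + T" "T \<le> S" unfolding T_def by auto
  have "X \<le> N" using card_mono[of "{..<N}" "{n. n < N \<and> P n}"] unfolding X_def by auto
  then have "\<bar>(real X + real T) / (real N + real S) - real X / real N\<bar> \<le> 2 * real B / (real N + real S)"
    using T M by (intro ratio_perturbation_le) auto
  then show ?thesis using M T unfolding rel_freq_def N_def[symmetric] X_def by simp
qed

lemma rel_freq_tendsto_if_blocks:
  assumes "\<And>e. 0 < e \<Longrightarrow> \<exists>B\<ge>1. \<forall>\<^sub>F N in sequentially. \<bar>rel_freq P (B * N) - l\<bar> < e"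
  shows "rel_freq P \<longlonglongrightarrow> l"
proof (rule LIMSEQ_I)
  fix e :: real assume e: "0 < e"
  obtain B N0 where B: "1 \<le> B" and N0: "\<And>N. N0 \<le> N \<Longrightarrow> \<bar>rel_freq P (B * N) - l\<bar> < e / 2"
    using assms[of "e / 2"] e unfolding eventually_sequentially by auto
  show "\<exists>M0. \<forall>M\<ge>M0. norm (rel_freq P M - l) < e"
  proof (intro exI allI impI)
    fix M assume M: "max (B * Suc N0) (nat \<lceil>4 * real B / e\<rceil> + 1) \<le> M"
    then have "Suc N0 * B \<le> M" by (simp add: mult.commute)
    then have div: "N0 \<le> M div B" using B by (simp add: less_eq_div_iff_mult_less_eq)
    have "B \<le> B * Suc N0" by simp
    then have "B \<le> M" using M by simp
    have "4 * real B / e < real M" using M by linarith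
    moreover have "0 < real M" using \<open>B \<le> M\<close> B by simp
    ultimately have "2 * real B / real M < e / 2" using e by (simp add: field_simps)
    then show "norm (rel_freq P M - l) < e"
      using rel_freq_block_approx[OF B \<open>B \<le> M\<close>, of P] N0[OF div] unfolding real_norm_def by linarith
  qed
qed

lemma rel_freq_tendsto_if_block_tendsto:
  assumes "1 \<le> B" "(\<lambda>N. rel_freq P (B * N)) \<longlonglongrightarrow> l"
  shows "rel_freq P \<longlonglongrightarrow> l"
  using assms by (intro rel_freq_tendsto_if_blocks) (auto simp: tendsto_iff dist_real_def)

section \<open>The frequencies of \<open>Delta\<close> and their limits\<close>

abbreviation freq_Delta :: "nat \<Rightarrow> nat \<Rightarrow> int \<Rightarrow> nat \<Rightarrow> real" where
  "freq_Delta b r d \<equiv> rel_freq (\<lambda>n. Delta b r n = d)"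

lemma mu_eq_lim_freq_Delta: "mu b r d = lim (freq_Delta b r d)"
  by (simp add: mu_def rel_freq_def[abs_def])

lemma freq_Delta_zero: "0 < N \<Longrightarrow> freq_Delta b 0 d N = of_bool (d = 0)"
  by (simp add: rel_freq_def Delta_def)

lemma card_Delta_mult_add:
  assumes "b \<ge> 2" "a < b"
  shows "card {n. n < b * N \<and> Delta b (b * q + a) n = d} =
    (b - a) * card {m. m < N \<and> Delta b q m = d - int a}
    + a * card {m. m < N \<and> Delta b (q + 1) m = d - int a + int b}"
proof -
  have digit: "(\<Sum>j<b. of_bool (Delta b (b * q + a) (b * m + j) = d)) =
      (b - a) * of_bool (Delta b q m = d - int a) + a * of_bool (Delta b (q + 1) m = d - int a + int b)"
    for m
  proof -
    have "(\<Sum>j<b. of_bool (Delta b (b * q + a) (b * m + j) = d)) =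
        (\<Sum>j<b. if j < b - a then of_bool (Delta b q m = d - int a)
                 else of_bool (Delta b (q + 1) m = d - int a + int b))"
      using assms by (intro sum.cong) (auto simp: Delta_mult_add)
    also have "\<dots> = (b - a) * of_bool (Delta b q m = d - int a)
        + (b - (b - a)) * of_bool (Delta b (q + 1) m = d - int a + int b)"
    proof -
      have "{..<b} \<inter> {j. j < b - a} = {..<b - a}" "{..<b} \<inter> - {j. j < b - a} = {b - a..<b}" by auto
      then show ?thesis by (simp add: sum.If_cases)
    qed
    finally show ?thesis using assms by simp
  qed
  have "card {n. n < b * N \<and> Delta b (b * q + a) n = d}
      = (\<Sum>m<N. \<Sum>j<b. of_bool (Delta b (b * q + a) (b * m + j) = d))"
    unfolding card_lessThan_filter_eq_sum by (simp add: sum_mult_product mult.commute add.commute)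
  also have "\<dots> = (b - a) * card {m. m < N \<and> Delta b q m = d - int a}
      + a * card {m. m < N \<and> Delta b (q + 1) m = d - int a + int b}"
    unfolding digit card_lessThan_filter_eq_sum by (simp add: sum.distrib sum_distrib_left)
  finally show ?thesis .
qed

lemma freq_Delta_mult_add:
  assumes "b \<ge> 2" "a < b" "0 < N"
  shows "freq_Delta b (b * q + a) d (b * N) =
    (real (b - a) * freq_Delta b q (d - int a) N + real a * freq_Delta b (q + 1) (d - int a + int b) N) / real b"
  using assms unfolding rel_freq_def card_Delta_mult_add[OF assms(1,2)]
  by (simp add: field_simps)

lemma freq_Delta_zero_tendsto: "freq_Delta b 0 d \<longlonglongrightarrow> of_bool (d = 0)"
  by (rule Lim_transform_eventually[OF tendsto_const])
     (use eventually_gt_at_top[of 0] in \<open>eventually_elim, simp add: freq_Delta_zero\<close>)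

lemma freq_Delta_mult_add_tendsto:
  assumes "b \<ge> 2" "a < b" "freq_Delta b q (d - int a) \<longlonglongrightarrow> l1"
    and "(\<lambda>N. real a * freq_Delta b (q + 1) (d - int a + int b) N) \<longlonglongrightarrow> real a * l2"
  shows "(\<lambda>N. freq_Delta b (b * q + a) d (b * N)) \<longlonglongrightarrow> (real (b - a) * l1 + real a * l2) / real b"
proof -
  have "(\<lambda>N. (real (b - a) * freq_Delta b q (d - int a) N
      + real a * freq_Delta b (q + 1) (d - int a + int b) N) / real b)
    \<longlonglongrightarrow> (real (b - a) * l1 + real a * l2) / real b"
    using assms(1) by (intro assms(3,4) tendsto_divide tendsto_add tendsto_mult_left tendsto_const) auto
  then show ?thesis
    by (rule Lim_transform_eventually)
       (use eventually_gt_at_top[of 0] in \<open>eventually_elim, simp add: freq_Delta_mult_add[OF assms(1,2)]\<close>)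
qed

text \<open>The limit law of \<open>Delta b 1\<close>: the value 1 - k(b - 1) is taken when n ends in exactly k
  digits b - 1, which has density (b - 1)/b^(k + 1).\<close>

definition Delta1_law :: "nat \<Rightarrow> int \<Rightarrow> real" where
  "Delta1_law b d = (if d \<le> 1 \<and> (int b - 1) dvd (1 - d)
     then (real b - 1) / real b ^ (nat ((1 - d) div (int b - 1)) + 1) else 0)"

lemma Delta1_law_at:
  assumes "b \<ge> 2"
  shows "Delta1_law b (1 - int k * (int b - 1)) = (real b - 1) / real b ^ (k + 1)"
  using assms by (simp add: Delta1_law_def)

lemma Delta1_law_eq_0:
  assumes "b \<ge> 2" "\<And>k. d \<noteq> 1 - int k * (int b - 1)"
  shows "Delta1_law b d = 0"
proof (rule ccontr)
  assume "Delta1_law b d \<noteq> 0"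
  then have "d \<le> 1" "(int b - 1) dvd (1 - d)" unfolding Delta1_law_def by (auto split: if_splits)
  then obtain k where k: "1 - d = (int b - 1) * k" by (auto elim: dvdE)
  with \<open>d \<le> 1\<close> have "0 \<le> (int b - 1) * k" by simp
  moreover have "0 < int b - 1" using assms(1) by simp
  ultimately have "0 \<le> k" by (simp add: zero_le_mult_iff)
  with k have "d = 1 - int (nat k) * (int b - 1)" by (simp add: mult.commute)
  then show False using assms(2) by blast
qed

lemma Delta1_law_rec:
  assumes "b \<ge> 2"
  shows "Delta1_law b d = ((real b - 1) * of_bool (d = 1) + Delta1_law b (d + (int b - 1))) / real b"
proof (cases "\<exists>k. d + (int b - 1) = 1 - int k * (int b - 1)")
  case True
  then obtain k where k: "d + (int b - 1) = 1 - int k * (int b - 1)" by blast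
  moreover have "0 < int (Suc k) * (int b - 1)" using assms by simp
  ultimately have d: "d = 1 - int (Suc k) * (int b - 1)" and "d \<noteq> 1" by (auto simp: algebra_simps)
  have "Delta1_law b d = (real b - 1) / real b ^ (Suc k + 1)"
    unfolding d by (rule Delta1_law_at[OF assms])
  moreover have "Delta1_law b (d + (int b - 1)) = (real b - 1) / real b ^ (k + 1)"
    unfolding k by (rule Delta1_law_at[OF assms])
  ultimately show ?thesis using \<open>d \<noteq> 1\<close> assms by simp
next
  case False
  have "d = 1 \<longleftrightarrow> (\<exists>k. d = 1 - int k * (int b - 1))"
  proof
    assume "\<exists>k. d = 1 - int k * (int b - 1)"
    then obtain k where "d = 1 - int k * (int b - 1)" by blast
    with False show "d = 1"
      by (cases k) (auto simp: algebra_simps)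
  qed auto
  then show ?thesis
    using False Delta1_law_eq_0[OF assms] Delta1_law_at[OF assms, of 0] by auto
qed

lemma Delta1_law_bounds:
  assumes "b \<ge> 2"
  shows "0 \<le> Delta1_law b d" "Delta1_law b d \<le> 1"
proof -
  have "real b - 1 \<le> real b ^ (k + 1)" for k
  proof -
    have "real b ^ 1 \<le> real b ^ (k + 1)" using assms by (intro power_increasing) auto
    then show ?thesis by simp
  qed
  then show "0 \<le> Delta1_law b d" "Delta1_law b d \<le> 1"
    using assms unfolding Delta1_law_def by auto
qed

lemma freq_Delta_one_tendsto:
  assumes b: "b \<ge> 2"
  shows "freq_Delta b 1 d \<longlonglongrightarrow> Delta1_law b d"
proof -
  have approx: "\<bar>freq_Delta b 1 d (b ^ k * N) - Delta1_law b d\<bar> \<le> 1 / real b ^ k" if "0 < N" for k N d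
    using that
  proof (induction k arbitrary: d N)
    case 0
    then show ?case
      using rel_freq_bounds[of "\<lambda>n. Delta b 1 n = d" N] Delta1_law_bounds[OF b, of d] by (auto simp: abs_le_iff)
  next
    case (Suc k)
    define M where "M = b ^ k * N"
    have M: "0 < M" "b ^ Suc k * N = b * M" using b Suc.prems unfolding M_def by simp_all
    have eq: "d - int 1 + int b = d + (int b - 1)" by simp
    have rec: "freq_Delta b 1 d (b * M) =
        ((real b - 1) * of_bool (d = 1) + freq_Delta b 1 (d + (int b - 1)) M) / real b"
      using freq_Delta_mult_add[OF b _ M(1), of 1 0 d, unfolded eq]
        freq_Delta_zero[OF M(1), of b "d - int 1"] b
      by (simp add: of_nat_diff)
    have "\<bar>freq_Delta b 1 d (b * M) - Delta1_law b d\<bar> =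
        \<bar>freq_Delta b 1 (d + (int b - 1)) M - Delta1_law b (d + (int b - 1))\<bar> / real b"
      by (simp only: rec Delta1_law_rec[OF b, of d] diff_divide_distrib[symmetric]
          add_diff_cancel_left abs_divide abs_of_nat)
    also have "\<dots> \<le> (1 / real b ^ k) / real b"
      using Suc.IH[OF Suc.prems] unfolding M_def by (intro divide_right_mono) auto
    finally show ?case unfolding M(2) by (simp add: mult.commute)
  qed
  show ?thesis
  proof (rule rel_freq_tendsto_if_blocks)
    fix e :: real assume "0 < e"
    then obtain k where "(1 / real b) ^ k < e" using real_arch_pow_inv[of e "1 / real b"] b by auto
    then have "1 / real b ^ k < e" by (simp add: power_one_over)
    have "\<forall>\<^sub>F N in sequentially. \<bar>freq_Delta b 1 d (b ^ k * N) - Delta1_law b d\<bar> < e"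
      using eventually_gt_at_top[of 0]
    proof eventually_elim
      case (elim N)
      then show ?case using approx[where k = k and N = N and d = d] elim \<open>1 / real b ^ k < e\<close> by linarith
    qed
    then show "\<exists>B\<ge>1. \<forall>\<^sub>F N in sequentially. \<bar>freq_Delta b 1 d (B * N) - Delta1_law b d\<bar> < e"
      using b by (intro exI[of _ "b ^ k"]) simp
  qed
qed

text \<open>The recursions relate r = b q + a to q and, when a \<noteq> 0, to q + 1; both are smaller
  than r once r \<ge> 2.\<close>

lemma digit_induct [consumes 1, case_names zero one step]:
  fixes r :: nat
  assumes "b \<ge> 2" "P 0" "P 1"
    and step: "\<And>q a. a < b \<Longrightarrow> 2 \<le> b * q + a \<Longrightarrow> P q \<Longrightarrow> (0 < a \<Longrightarrow> P (q + 1)) \<Longrightarrow> P (b * q + a)"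
  shows "P r"
proof (induction r rule: less_induct)
  case (less r)
  show ?case
  proof (cases "r < 2")
    case True
    then have "r = 0 \<or> r = 1" by linarith
    then show ?thesis using assms(2,3) by blast
  next
    case False
    define q where "q = r div b"
    define a where "a = r mod b"
    have r: "r = b * q + a" and "a < b" using assms(1) unfolding q_def a_def by simp_all
    have "q < r" using assms(1) False unfolding q_def by simp
    moreover have "q + 1 < r" if "0 < a"
    proof (cases "q = 0")
      case False
      then have "q + 1 \<le> 2 * q" by simp
      also have "\<dots> \<le> b * q" using assms(1) by simp
      finally show ?thesis using that r by simp
    qed (use False r in simp)
    ultimately show ?thesis using less step[OF \<open>a < b\<close>] False r by simp
  qed
qed

lemma freq_Delta_convergent:
  assumes b: "b \<ge> 2"
  shows "convergent (freq_Delta b r d)"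
  using b
proof (induction r arbitrary: d rule: digit_induct)
  case (zero d)
  then show ?case using freq_Delta_zero_tendsto by (auto simp: convergent_def)
next
  case (one d)
  then show ?case using freq_Delta_one_tendsto[OF b] by (auto simp: convergent_def)
next
  case (step q a d)
  obtain l1 where l1: "freq_Delta b q (d - int a) \<longlonglongrightarrow> l1"
    using step.IH(1) by (auto simp: convergent_def)
  obtain l2 where l2: "(\<lambda>N. real a * freq_Delta b (q + 1) (d - int a + int b) N) \<longlonglongrightarrow> real a * l2"
  proof (cases "a = 0")
    case False
    then show ?thesis using step.IH(2) that by (auto simp: convergent_def intro: tendsto_mult_left)
  qed (use that in simp)
  have "(\<lambda>N. freq_Delta b (b * q + a) d (b * N)) \<longlonglongrightarrow> (real (b - a) * l1 + real a * l2) / real b"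
    by (rule freq_Delta_mult_add_tendsto[OF b step.hyps(1) l1 l2])
  moreover have "1 \<le> b" using b by simp
  ultimately show ?case unfolding convergent_def by (blast intro: rel_freq_tendsto_if_block_tendsto)
qed

lemma freq_Delta_tendsto_mu:
  assumes "b \<ge> 2"
  shows "freq_Delta b r d \<longlonglongrightarrow> mu b r d"
  using freq_Delta_convergent[OF assms] unfolding mu_eq_lim_freq_Delta convergent_LIMSEQ_iff .

lemma mu_zero: "mu b 0 d = of_bool (d = 0)"
  unfolding mu_eq_lim_freq_Delta by (rule limI[OF freq_Delta_zero_tendsto])

lemma mu_one: "b \<ge> 2 \<Longrightarrow> mu b 1 = Delta1_law b"
  unfolding mu_eq_lim_freq_Delta by (intro ext limI freq_Delta_one_tendsto)

lemma mu_mult_add: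
  assumes b: "b \<ge> 2" and a: "a < b"
  shows "mu b (b * q + a) d =
    (real (b - a) * mu b q (d - int a) + real a * mu b (q + 1) (d - int a + int b)) / real b"
proof -
  have "strict_mono (\<lambda>N. b * N)" using b by (auto simp: strict_mono_def)
  then have "(\<lambda>N. freq_Delta b (b * q + a) d (b * N)) \<longlonglongrightarrow> mu b (b * q + a) d"
    using LIMSEQ_subseq_LIMSEQ[OF freq_Delta_tendsto_mu[OF b]] by (simp add: o_def)
  moreover have "(\<lambda>N. freq_Delta b (b * q + a) d (b * N))
    \<longlonglongrightarrow> (real (b - a) * mu b q (d - int a) + real a * mu b (q + 1) (d - int a + int b)) / real b"
    by (intro freq_Delta_mult_add_tendsto[OF b a] tendsto_mult_left freq_Delta_tendsto_mu[OF b])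
  ultimately show ?thesis by (rule LIMSEQ_unique)
qed

section \<open>Moments\<close>

definition has_moments :: "(int \<Rightarrow> real) \<Rightarrow> real \<Rightarrow> real \<Rightarrow> real \<Rightarrow> bool" where
  "has_moments p m0 m1 m2 \<longleftrightarrow> (p has_sum m0) UNIV \<and> ((\<lambda>d. of_int d * p d) has_sum m1) UNIV
     \<and> ((\<lambda>d. (of_int d)\<^sup>2 * p d) has_sum m2) UNIV"

lemma has_sum_shift_int:
  assumes "(f has_sum s) (UNIV :: int set)"
  shows "((\<lambda>d. f (d - t)) has_sum s) UNIV"
proof -
  have "bij_betw (\<lambda>d::int. d - t) UNIV UNIV"
    by (rule bij_betwI[where g = "\<lambda>d. d + t"]) auto
  then show ?thesis using assms by (subst has_sum_reindex_bij_betw) auto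
qed

lemma has_moments_shift:
  assumes "has_moments p m0 m1 m2"
  shows "has_moments (\<lambda>d. p (d - t)) m0 (m1 + of_int t * m0) (m2 + 2 * of_int t * m1 + (of_int t)\<^sup>2 * m0)"
proof -
  have h: "(p has_sum m0) UNIV" "((\<lambda>d. of_int d * p d) has_sum m1) UNIV"
    "((\<lambda>d. (of_int d)\<^sup>2 * p d) has_sum m2) UNIV" using assms by (auto simp: has_moments_def)
  have "((\<lambda>e. of_int e * p e + of_int t * p e) has_sum (m1 + of_int t * m0)) UNIV"
    "((\<lambda>e. (of_int e)\<^sup>2 * p e + 2 * of_int t * (of_int e * p e) + (of_int t)\<^sup>2 * p e)
      has_sum (m2 + 2 * of_int t * m1 + (of_int t)\<^sup>2 * m0)) UNIV"
    by (intro has_sum_add has_sum_cmult_right h)+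
  from this[THEN has_sum_shift_int, of t] show ?thesis
    using has_sum_shift_int[OF h(1), of t]
    by (simp add: has_moments_def power2_eq_square algebra_simps)
qed

lemma has_moments_lincomb:
  assumes "has_moments p m0 m1 m2" "has_moments p' n0 n1 n2"
  shows "has_moments (\<lambda>d. \<alpha> * p d + \<beta> * p' d) (\<alpha> * m0 + \<beta> * n0) (\<alpha> * m1 + \<beta> * n1) (\<alpha> * m2 + \<beta> * n2)"
proof -
  have "((\<lambda>d. \<alpha> * p d + \<beta> * p' d) has_sum (\<alpha> * m0 + \<beta> * n0)) UNIV"
    "((\<lambda>d. \<alpha> * (of_int d * p d) + \<beta> * (of_int d * p' d)) has_sum (\<alpha> * m1 + \<beta> * n1)) UNIV"
    "((\<lambda>d. \<alpha> * ((of_int d)\<^sup>2 * p d) + \<beta> * ((of_int d)\<^sup>2 * p' d)) has_sum (\<alpha> * m2 + \<beta> * n2)) UNIV"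
    using assms by (intro has_sum_add has_sum_cmult_right; simp add: has_moments_def)+
  then show ?thesis by (simp add: has_moments_def algebra_simps)
qed

lemma has_moments_unique:
  "has_moments p m0 m1 m2 \<Longrightarrow> has_moments p n0 n1 n2 \<Longrightarrow> m0 = n0 \<and> m1 = n1 \<and> m2 = n2"
  unfolding has_moments_def by (meson has_sum_unique)

lemma variance_int_eq:
  assumes "has_moments p 1 0 v"
  shows "variance_int p = v"
proof -
  have "(\<Sum>\<^sub>\<infinity>d. (of_int d)\<^sup>2 * p d) = v" "(\<Sum>\<^sub>\<infinity>d. of_int d * p d) = 0"
    using assms unfolding has_moments_def by (auto intro: infsumI)
  then show ?thesis unfolding variance_int_def by simp
qed

lemma has_moments_mu_mult_add:
  assumes b: "b \<ge> 2" and a: "a < b"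
    and q: "has_moments (mu b q) m0 m1 m2" and q1: "has_moments (mu b (q + 1)) n0 n1 n2"
  defines "\<alpha> \<equiv> (real b - real a) / real b" and "\<beta> \<equiv> real a / real b" and "c \<equiv> real a - real b"
  shows "has_moments (mu b (b * q + a)) (\<alpha> * m0 + \<beta> * n0)
     (\<alpha> * (m1 + real a * m0) + \<beta> * (n1 + c * n0))
     (\<alpha> * (m2 + 2 * real a * m1 + (real a)\<^sup>2 * m0) + \<beta> * (n2 + 2 * c * n1 + c\<^sup>2 * n0))"
proof -
  have "mu b (b * q + a) = (\<lambda>d. \<alpha> * mu b q (d - int a) + \<beta> * mu b (q + 1) (d - (int a - int b)))"
  proof
    fix d
    show "mu b (b * q + a) d = \<alpha> * mu b q (d - int a) + \<beta> * mu b (q + 1) (d - (int a - int b))"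
      using mu_mult_add[OF b a, of q d] a b unfolding \<alpha>_def \<beta>_def by (simp add: of_nat_diff field_simps)
  qed
  moreover have "c = of_int (int a - int b)" unfolding c_def by simp
  ultimately show ?thesis
    using has_moments_lincomb[OF has_moments_shift[OF q, of "int a"] has_moments_shift[OF q1, of "int a - int b"], of \<alpha> \<beta>]
    by simp
qed

corollary has_moments_mu_mult_add_centered:
  assumes "b \<ge> 2" "a < b" "has_moments (mu b q) 1 0 s" "has_moments (mu b (q + 1)) 1 0 t"
  shows "has_moments (mu b (b * q + a)) 1 0
    (((real b - real a) * (s + (real a)\<^sup>2) + real a * (t + (real a - real b)\<^sup>2)) / real b)"
proof -
  have eqs: "(real b - real a) / real b * 1 + real a / real b * 1 = 1"
    "(real b - real a) / real b * (0 + real a * 1) + real a / real b * (0 + (real a - real b) * 1) = 0"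
    "(real b - real a) / real b * (s + 2 * real a * 0 + (real a)\<^sup>2 * 1)
      + real a / real b * (t + 2 * (real a - real b) * 0 + (real a - real b)\<^sup>2 * 1)
     = ((real b - real a) * (s + (real a)\<^sup>2) + real a * (t + (real a - real b)\<^sup>2)) / real b"
    using assms(1) by (simp_all add: field_simps)
  show ?thesis using has_moments_mu_mult_add[OF assms] unfolding eqs .
qed

lemma has_moments_mu_zero: "has_moments (mu b 0) 1 0 0"
proof -
  have "mu b 0 = (\<lambda>d. of_bool (d = 0))" by (rule ext) (rule mu_zero)
  moreover have point: "((\<lambda>d::int. f d * of_bool (d = 0)) has_sum (f 0 :: real)) UNIV" for f
    by (rule has_sum_finite_neutralI[of "{0}"]) auto
  ultimately show ?thesis
    unfolding has_moments_def using point[of "\<lambda>_. 1"] point[of of_int] point[of "\<lambda>d. (of_int d)\<^sup>2"] by simp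
qed

lemma summable_Suc_square_div_power2: "summable (\<lambda>n::nat. (real n + 1)\<^sup>2 / 2 ^ n)"
proof (rule summable_ratio_test[of "3/4" 4])
  fix n :: nat assume n: "4 \<le> n"
  then have "4 \<le> real n" by simp
  moreover from this have "4 * real n \<le> real n * real n" by (intro mult_right_mono) auto
  ultimately have "5 + 2 * real n \<le> real n * real n" by linarith
  then have "2 * (real n + 2)\<^sup>2 \<le> 3 * (real n + 1)\<^sup>2"
    by (simp add: power2_eq_square algebra_simps)
  then show "norm ((real (Suc n) + 1)\<^sup>2 / 2 ^ Suc n) \<le> 3/4 * norm ((real n + 1)\<^sup>2 / 2 ^ n)"
    by (simp add: field_simps)
qed simp

lemma Delta1_law_second_moment_summable:
  assumes b: "b \<ge> 2"
  shows "(\<lambda>d. ((of_int d)\<^sup>2 + 1) * Delta1_law b d) summable_on UNIV"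
proof -
  define g where "g k = 1 - int k * (int b - 1)" for k
  define c where "c = real b - 1"
  have c: "1 \<le> c" using b unfolding c_def by simp
  have "inj g" unfolding g_def inj_def using b by auto
  have bound: "norm (((of_int (g k))\<^sup>2 + 1) * Delta1_law b (g k)) \<le> (2 * c ^ 3) * ((real k + 1)\<^sup>2 / 2 ^ k)" for k
  proof -
    define X where "X = (real k + 1) * c"
    have gk: "of_int (g k) = 1 - real k * c" unfolding g_def c_def by simp
    have X: "X = real k * c + c" unfolding X_def by (simp add: algebra_simps)
    have kc: "0 \<le> real k * c" using c by simp
    have "\<bar>of_int (g k)\<bar> \<le> X" unfolding gk X abs_le_iff using c kc by (intro conjI) linarith+
    moreover have "1 \<le> X" unfolding X using c kc by linarith
    ultimately have "(of_int (g k))\<^sup>2 \<le> X\<^sup>2" "1 \<le> X\<^sup>2"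
      by (metis abs_ge_zero power2_abs power_mono, simp add: one_le_power)
    then have weight: "(of_int (g k))\<^sup>2 + 1 \<le> 2 * ((real k + 1) * c)\<^sup>2" unfolding X_def by linarith
    have "(2::real) ^ k \<le> real b ^ (k + 1)"
      using b order_trans[OF power_increasing[of k "k + 1" 2] power_mono[of 2 "real b" "k + 1"]] by simp
    then have law: "Delta1_law b (g k) \<le> c / 2 ^ k"
      using b c unfolding g_def c_def Delta1_law_at[OF b] by (intro divide_left_mono) auto
    have "norm (((of_int (g k))\<^sup>2 + 1) * Delta1_law b (g k)) = ((of_int (g k))\<^sup>2 + 1) * Delta1_law b (g k)"
      using Delta1_law_bounds[OF b] by simp
    also have "\<dots> \<le> 2 * ((real k + 1) * c)\<^sup>2 * (c / 2 ^ k)"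
      using weight law Delta1_law_bounds[OF b] by (intro mult_mono) auto
    also have "\<dots> = (2 * c ^ 3) * ((real k + 1)\<^sup>2 / 2 ^ k)"
      by (simp add: field_simps power2_eq_square power3_eq_cube)
    finally show ?thesis .
  qed
  have "summable (\<lambda>k. norm (((of_int (g k))\<^sup>2 + 1) * Delta1_law b (g k)))"
    by (rule summable_comparison_test[OF _ summable_mult[OF summable_Suc_square_div_power2]])
       (use bound in auto)
  then have "(\<lambda>k. ((of_int (g k))\<^sup>2 + 1) * Delta1_law b (g k)) summable_on UNIV"
    by (rule norm_summable_imp_summable_on)
  then have "(\<lambda>d. ((of_int d)\<^sup>2 + 1) * Delta1_law b d) summable_on range g"
    using summable_on_reindex[OF \<open>inj g\<close>, of "\<lambda>d. ((of_int d)\<^sup>2 + 1) * Delta1_law b d"]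
    by (simp add: o_def)
  moreover have "Delta1_law b d = 0" if "d \<notin> range g" for d
    using that Delta1_law_eq_0[OF b, of d] unfolding g_def by auto
  ultimately show ?thesis
    by (subst summable_on_cong_neutral[where T = "range g"]) auto
qed

lemma Delta1_law_has_moments:
  assumes b: "b \<ge> 2"
  shows "\<exists>m0 m1 m2. has_moments (Delta1_law b) m0 m1 m2"
proof -
  have dominated: "(\<lambda>d. h d * Delta1_law b d) summable_on UNIV"
    if h: "\<And>d. \<bar>h d\<bar> \<le> (of_int d)\<^sup>2 + 1" for h :: "int \<Rightarrow> real"
  proof -
    have bound: "norm (h d * Delta1_law b d) \<le> ((of_int d)\<^sup>2 + 1) * Delta1_law b d" for d
      using mult_right_mono[OF h Delta1_law_bounds(1)[OF b]] Delta1_law_bounds(1)[OF b, of d]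
      by (simp add: abs_mult)
    show ?thesis
      by (rule abs_summable_summable, rule summable_on_comparison_test[OF Delta1_law_second_moment_summable[OF b]])
         (use bound in auto)
  qed
  have abs_le: "\<bar>x\<bar> \<le> x\<^sup>2 + 1" for x :: real
  proof -
    have "0 \<le> (\<bar>x\<bar> - 1)\<^sup>2" by simp
    then show ?thesis by (simp add: power2_eq_square algebra_simps abs_mult_self_eq)
  qed
  have "(\<lambda>d. 1 * Delta1_law b d) summable_on UNIV" "(\<lambda>d. of_int d * Delta1_law b d) summable_on UNIV"
    "(\<lambda>d. (of_int d)\<^sup>2 * Delta1_law b d) summable_on UNIV"
    by (rule dominated; simp add: abs_le)+
  then show ?thesis unfolding has_moments_def summable_on_def by auto
qed

text \<open>The moments of \<mu>(1) are only known to exist; their values follow from the fixed-point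
  equation \<mu>(1)(d) = ((b - 1) \<mu>(0)(d - 1) + \<mu>(1)(d + b - 1))/b.\<close>

lemma has_moments_mu_one:
  assumes b: "b \<ge> 2"
  shows "\<exists>v. has_moments (mu b 1) 1 0 v"
proof -
  obtain m0 m1 m2 where m: "has_moments (mu b 1) m0 m1 m2"
    using Delta1_law_has_moments[OF b] mu_one[OF b] by auto
  have "1 < b" "has_moments (mu b (0 + 1)) m0 m1 m2" using b m by simp_all
  from has_moments_unique[OF m has_moments_mu_mult_add[OF b this(1) has_moments_mu_zero this(2),
        unfolded mult_0_right add_0]]
  have e0: "m0 = (real b - 1) / real b + m0 / real b"
    and e1: "m1 = (real b - 1) / real b + (m1 + (1 - real b) * m0) / real b"
    by simp_all
  from e0 have "(m0 - 1) * (real b - 1) = 0" using b by (simp add: field_simps)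
  then have m0: "m0 = 1" using b by simp
  from e1 have "m1 * (real b - 1) = 0" using b unfolding m0 by (simp add: field_simps)
  then have "m1 = 0" using b by simp
  with m m0 show ?thesis by blast
qed

lemma has_moments_mu:
  assumes b: "b \<ge> 2"
  shows "has_moments (mu b r) 1 0 (variance_int (mu b r))"
proof -
  have "\<exists>v. has_moments (mu b r) 1 0 v"
    using b
  proof (induction r rule: digit_induct)
    case (step q a)
    obtain s where s: "has_moments (mu b q) 1 0 s" using step.IH(1) by blast
    show ?case
    proof (cases "a = 0")
      case True
      have "mu b (b * q + 0) d = mu b q d" for d using mu_mult_add[OF b, of 0 q d] b by simp
      then have "mu b (b * q + a) = mu b q" using True by auto
      then show ?thesis using s by auto
    next
      case False
      then obtain t where "has_moments (mu b (q + 1)) 1 0 t" using step.IH(2) by blast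
      then show ?thesis using has_moments_mu_mult_add_centered[OF b step.hyps(1) s] by blast
    qed
  qed (use has_moments_mu_zero has_moments_mu_one[OF b] in blast)+
  then show ?thesis using variance_int_eq by metis
qed

section \<open>The variance recursion\<close>

abbreviation variance_mu :: "nat \<Rightarrow> nat \<Rightarrow> real" where
  "variance_mu b r \<equiv> variance_int (mu b r)"

lemma variance_mu_mult_add:
  assumes b: "b \<ge> 2" and a: "a < b"
  shows "variance_mu b (b * q + a) =
    ((real b - real a) * variance_mu b q + real a * variance_mu b (q + 1)) / real b + real a * (real b - real a)"
proof -
  have "variance_mu b (b * q + a) =
    ((real b - real a) * (variance_mu b q + (real a)\<^sup>2) + real a * (variance_mu b (q + 1) + (real a - real b)\<^sup>2)) / real b"
    by (rule variance_int_eq[OF has_moments_mu_mult_add_centered[OF b a has_moments_mu[OF b] has_moments_mu[OF b]]])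
  then show ?thesis using b by (simp add: field_simps power2_eq_square)
qed

lemma variance_mu_zero: "variance_mu b 0 = 0"
  by (rule variance_int_eq[OF has_moments_mu_zero])

lemma variance_mu_one:
  assumes b: "b \<ge> 2"
  shows "variance_mu b 1 = real b"
proof -
  have "1 < b" using b by simp
  obtain V where V: "variance_mu b 1 = V" by simp
  have "V = ((real b - real 1) * 0 + real 1 * V) / real b + real 1 * (real b - real 1)"
    using variance_mu_mult_add[OF b \<open>1 < b\<close>, of 0, unfolded mult_0_right add_0 variance_mu_zero V] .
  then have "(V - real b) * (real b - 1) = 0" using b by (simp add: field_simps)
  then show ?thesis using b V by simp
qed

lemma variance_mu_succ_diff:
  assumes b: "b \<ge> 2" and a: "a < b"
  shows "variance_mu b (b * q + a + 1) - variance_mu b (b * q + a) =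
    (variance_mu b (q + 1) - variance_mu b q) / real b
    + (if a + 1 < b then real b - 2 * real a - 1 else 1 - real b)"
proof (cases "a + 1 < b")
  case True
  then show ?thesis
    using variance_mu_mult_add[OF b True, of q] variance_mu_mult_add[OF b a, of q] b
    by (simp add: add.assoc field_simps)
next
  case False
  then have carry: "b * q + a + 1 = b * (q + 1) + 0" and "real a = real b - 1" using a by auto
  have "variance_mu b (b * (q + 1) + 0) = variance_mu b (q + 1)"
    using variance_mu_mult_add[OF b, of 0 "q + 1"] b by simp
  then show ?thesis unfolding carry
    using False variance_mu_mult_add[OF b a, of q] \<open>real a = real b - 1\<close> b by (simp add: field_simps)
qed

lemma variance_mu_diff_le:
  assumes b: "b \<ge> 2"
  shows "\<bar>variance_mu b (r + 1) - variance_mu b r\<bar> \<le> real b"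
proof (induction r rule: less_induct)
  case (less r)
  show ?case
  proof (cases "r = 0")
    case True
    then show ?thesis using variance_mu_zero variance_mu_one[OF b] by simp
  next
    case False
    define q where "q = r div b"
    define a where "a = r mod b"
    have r: "r = b * q + a" and a: "a < b" using b unfolding q_def a_def by simp_all
    define x where "x = (variance_mu b (q + 1) - variance_mu b q) / real b"
    define c where "c = (if a + 1 < b then real b - 2 * real a - 1 else 1 - real b)"
    have "\<bar>variance_mu b (q + 1) - variance_mu b q\<bar> \<le> real b"
      using less[of q] False b unfolding q_def by simp
    then have "\<bar>x\<bar> \<le> 1" using b unfolding x_def by (simp add: abs_divide divide_le_eq)
    moreover have "\<bar>c\<bar> \<le> real b - 1" using a unfolding c_def by auto
    moreover have "variance_mu b (r + 1) - variance_mu b r = x + c"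
      unfolding r x_def c_def by (rule variance_mu_succ_diff[OF b a])
    ultimately show ?thesis using abs_triangle_ineq[of x c] by linarith
  qed
qed

text \<open>The bound also holds for r = 0.\<close>

theorem mainTheorem14:
  fixes b r :: nat
  assumes "b \<ge> 2" and "r \<ge> 1"
  shows "\<bar>variance_int (mu b (r + 1)) - variance_int (mu b r)\<bar> \<le> real b"
  using variance_mu_diff_le[OF assms(1)] .

end
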